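(* For monomials $T$ of $K\{X\}_\infty$ define $K$-linear maps $\partial_T:K\{X\}_\infty\to K\{X\}_\infty$ by $\Delta_a(f)=\sum_T T\otimes\partial_T(f)$ (sum over all monomials $T$, including $T=1$, so $\partial_1=\mathrm{id}$). Then: (i) $\partial_S\circ\partial_T=\partial_T\circ\partial_S$ for all monomials $S,T$; (ii) for every $x_k\in X$, $\partial_{x_k}$ is the derivation $\partial_k$; (iii) for a monomial $T$ and $f_1,\dots,f_p\in K\{X\}_\infty$, $$\partial_T(\vee^p(f_1,\dots,f_p))=\sum_{\vee^p(T^1,\dots,T^p)=T}\vee^p\bigl(\partial_{T^1}(f_1),\dots,\partial_{T^p}(f_p)\bigr),$$ the sum running over all tuples of (possibly empty) monomials $T^1,\dots,T^p$ with $\vee^p(T^1,\dots,T^p)=T$. In particular, if $T=\vee^2(T^1,T^2)$ with $T^1,T^2\neq1$ and $f_1,f_2\in K\{X\}$, then $\partial_T(f_1\cdot f_2)=f_1\cdot\partial_T(f_2)+\partial_{T^1}(f_1)\cdot\partial_{T^2}(f_2)+\partial_T(f_1)\cdot f_2$.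
   Context: $K$ is a field of characteristic $0$ and $X=\{x_1,x_2,\dots\}$ a finite or countable set of variables. A planar rooted tree is reduced if no vertex has exactly one incoming edge. $K\{X\}_\infty$ has basis the monomials: the empty tree $1$ and all planar reduced rooted trees with leaves labelled by elements of $X$; for $k\ge2$, $\vee^k$ grafts $k$ nonempty trees (in order) onto a new root, extended multilinearly, with unit conventions (arguments equal to $1$ are omitted, $\vee^1=\mathrm{id}$, $\vee^k(1,\dots,1)=1$). $K\{X\}$ is the span of $1$ and the binary trees, with $a\cdot b=\vee^2(a,b)$. $K\{X\}_\infty\otimes K\{X\}_\infty$ carries the operations componentwise, and $\Delta_a$ is the unique unital homomorphism for the $\vee^k$ with $\Delta_a(x_i)=x_i\otimes1+1\otimes x_i$. $\partial_k$ is the derivation with $\partial_k(x_l)=\delta_{kl}$, where a derivation $D$ satisfies $D(\vee^n(v_1,\dots,v_n))=\sum_i\vee^n(v_1,\dots,D(v_i),\dots,v_n)$ and $D|_K=0$. *)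

theory Defs
  imports Main "HOL-Library.Poly_Mapping" "HOL-Library.Countable"
begin

text \<open>Nonempty planar rooted trees: a leaf labelled by a variable, or a root
with an ordered list of subtrees.  A monomial of K{X}_inf is either the empty
tree 1 (represented by None) or Some t with t a reduced tree.\<close>

datatype 'x tr = Lf 'x | Nd "'x tr list"

type_synonym 'x mono = "'x tr option"

fun reduced :: "'x tr \<Rightarrow> bool" where
  "reduced (Lf x) = True"
| "reduced (Nd ts) = (2 \<le> length ts \<and> (\<forall>t\<in>set ts. reduced t))"

fun binary :: "'x tr \<Rightarrow> bool" where
  "binary (Lf x) = True"
| "binary (Nd ts) = (length ts = 2 \<and> (\<forall>t\<in>set ts. binary t))"

definition monomials :: "'x mono set" where
  "monomials = {None} \<union> Some ` {t. reduced t}"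

definition bin_monomials :: "'x mono set" where
  "bin_monomials = {None} \<union> Some ` {t. binary t}"

definition vee_m :: "'x mono list \<Rightarrow> 'x mono" where
  "vee_m Ts = (let us = map the (filter (\<lambda>T. T \<noteq> None) Ts) in
     (case us of [] \<Rightarrow> None | [u] \<Rightarrow> Some u | _ \<Rightarrow> Some (Nd us)))"

text \<open>Elements of K{X}_inf are finitely supported functions from monomials to K,
elements of K{X}_inf \<otimes> K{X}_inf are finitely supported functions on pairs of
monomials.\<close>

definition Kinf :: "('x mono \<Rightarrow>\<^sub>0 'k::field) set" where
  "Kinf = {f. Poly_Mapping.keys f \<subseteq> monomials}"

definition KX :: "('x mono \<Rightarrow>\<^sub>0 'k::field) set" where
  "KX = {f. Poly_Mapping.keys f \<subseteq> bin_monomials}"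

definition mext :: "('m list \<Rightarrow> 'm) \<Rightarrow> ('m \<Rightarrow>\<^sub>0 'k::field) list \<Rightarrow> ('m \<Rightarrow>\<^sub>0 'k)" where
  "mext op fs = (\<Sum>ms\<in>listset (map Poly_Mapping.keys fs).
      Poly_Mapping.single (op ms) (prod_list (map2 Poly_Mapping.lookup fs ms)))"

definition lext :: "('m \<Rightarrow> ('n \<Rightarrow>\<^sub>0 'k::field)) \<Rightarrow> ('m \<Rightarrow>\<^sub>0 'k) \<Rightarrow> ('n \<Rightarrow>\<^sub>0 'k)" where
  "lext g f = (\<Sum>m\<in>Poly_Mapping.keys f. Poly_Mapping.map (\<lambda>c. Poly_Mapping.lookup f m * c) (g m))"

definition basis :: "'m \<Rightarrow> ('m \<Rightarrow>\<^sub>0 'k::field)" where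
  "basis m = Poly_Mapping.single m 1"

definition vee :: "('x mono \<Rightarrow>\<^sub>0 'k::field) list \<Rightarrow> ('x mono \<Rightarrow>\<^sub>0 'k)" where
  "vee fs = mext vee_m fs"

definition mult :: "('x mono \<Rightarrow>\<^sub>0 'k::field) \<Rightarrow> ('x mono \<Rightarrow>\<^sub>0 'k) \<Rightarrow> ('x mono \<Rightarrow>\<^sub>0 'k)" where
  "mult a b = vee [a, b]"

definition vee_pair :: "('x mono \<times> 'x mono) list \<Rightarrow> 'x mono \<times> 'x mono" where
  "vee_pair ps = (vee_m (map fst ps), vee_m (map snd ps))"

definition vee2 :: "(('x mono \<times> 'x mono) \<Rightarrow>\<^sub>0 'k::field) list \<Rightarrow> (('x mono \<times> 'x mono) \<Rightarrow>\<^sub>0 'k)" where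
  "vee2 fs = mext vee_pair fs"

text \<open>The unital homomorphism for all vee^k with x_i \<mapsto> x_i \<otimes> 1 + 1 \<otimes> x_i,
given by its values on the basis.\<close>

fun delta_tr :: "'x tr \<Rightarrow> (('x mono \<times> 'x mono) \<Rightarrow>\<^sub>0 'k::field)" where
  "delta_tr (Lf x) = basis (Some (Lf x), None) + basis (None, Some (Lf x))"
| "delta_tr (Nd ts) = vee2 (map delta_tr ts)"

definition delta_m :: "'x mono \<Rightarrow> (('x mono \<times> 'x mono) \<Rightarrow>\<^sub>0 'k::field)" where
  "delta_m T = (case T of None \<Rightarrow> basis (None, None) | Some t \<Rightarrow> delta_tr t)"

definition Delta_a :: "('x mono \<Rightarrow>\<^sub>0 'k::field) \<Rightarrow> (('x mono \<times> 'x mono) \<Rightarrow>\<^sub>0 'k)" where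
  "Delta_a f = lext delta_m f"

text \<open>partial_T f is defined by Delta_a(f) = \<Sum>_T T \<otimes> partial_T(f).\<close>

definition dT :: "'x mono \<Rightarrow> ('x mono \<Rightarrow>\<^sub>0 'k::field) \<Rightarrow> ('x mono \<Rightarrow>\<^sub>0 'k)" where
  "dT T f = (\<Sum>p\<in>{p\<in>Poly_Mapping.keys (Delta_a f). fst p = T}.
               Poly_Mapping.single (snd p) (Poly_Mapping.lookup (Delta_a f) p))"

function der_tr :: "'x \<Rightarrow> 'x tr \<Rightarrow> ('x mono \<Rightarrow>\<^sub>0 'k::field)" where
  "der_tr k (Lf x) = (if x = k then basis None else 0)"
| "der_tr k (Nd ts) = (\<Sum>i<length ts.
      vee ((map (\<lambda>t. basis (Some t)) ts)[i := der_tr k (ts ! i)]))"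
  by pat_completeness auto
termination
proof (relation "measure (\<lambda>(k, t). size t)")
  show "wf (measure (\<lambda>(k, t). size t))" by simp
next
  fix k :: 'x and ts :: "'x tr list" and i
  assume "i \<in> {..<length ts}"
  then have "ts ! i \<in> set ts" by simp
  then have "size (ts ! i) \<le> size_list size ts" by (rule size_list_estimation') simp
  then show "((k, ts ! i), k, Nd ts) \<in> measure (\<lambda>(k, t). size t)" by simp
qed

definition der_m :: "'x \<Rightarrow> 'x mono \<Rightarrow> ('x mono \<Rightarrow>\<^sub>0 'k::field)" where
  "der_m k T = (case T of None \<Rightarrow> 0 | Some t \<Rightarrow> der_tr k t)"

definition der :: "'x \<Rightarrow> ('x mono \<Rightarrow>\<^sub>0 'k::field) \<Rightarrow> ('x mono \<Rightarrow>\<^sub>0 'k)" where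
  "der k f = lext (der_m k) f"

end

theory Submission
  imports Defs
begin

text \<open>By construction \<open>Delta_a\<close> is a homomorphism for every \<open>vee\<^sup>p\<close>: it is defined
on a tree by grafting the coproducts of its subtrees, and \<open>vee\<^sup>p\<close> on the tensor square
is the componentwise multilinear extension.  Collecting the terms with left tensor factor
\<open>T\<close> in \<open>Delta_a (vee\<^sup>p(f\<^sub>1,\<dots>,f\<^sub>p)) = vee\<^sup>p(Delta_a f\<^sub>1,\<dots>,Delta_a f\<^sub>p)\<close>
gives (iii) at once.  Since every tree with at least two subtrees is the graft of its
subtrees, (iii) drives an induction on trees: \<open>\<partial>\<^sub>1\<close> is the identity, \<open>\<partial>\<^sub>x\<^sub>k\<close>
obeys the recursion defining the derivation \<open>\<partial>\<^sub>k\<close>, and \<open>\<partial>\<^sub>S(\<partial>\<^sub>T(t))\<close> becomes a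
double sum over factorizations of \<open>S\<close> and \<open>T\<close> which is symmetric once \<open>\<partial>\<^sub>S\<close> and
\<open>\<partial>\<^sub>T\<close> commute on the subtrees.  The product rule is (iii) for \<open>p = 2\<close>: a tree
\<open>vee\<^sup>2(T\<^sub>1,T\<^sub>2)\<close> with \<open>T\<^sub>1,T\<^sub>2 \<noteq> 1\<close> factors in exactly three ways.\<close>

definition pm_scale :: "'k::field \<Rightarrow> ('m \<Rightarrow>\<^sub>0 'k) \<Rightarrow> ('m \<Rightarrow>\<^sub>0 'k)" where
  "pm_scale c g = Poly_Mapping.map (\<lambda>x. c * x) g"

lemma lookup_pm_scale [simp]: "Poly_Mapping.lookup (pm_scale c g) y = c * Poly_Mapping.lookup g y"
  by (simp add: pm_scale_def map.rep_eq when_def)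

lemma pm_scale_zero [simp]: "pm_scale c 0 = 0"
  by (rule poly_mapping_eqI) simp

lemma pm_scale_one [simp]: "pm_scale 1 f = f"
  by (rule poly_mapping_eqI) simp

lemma pm_scale_single: "pm_scale c (Poly_Mapping.single a d) = Poly_Mapping.single a (c * d)"
  by (rule poly_mapping_eqI) (simp add: lookup_single when_def)

lemma pm_scale_sum: "pm_scale c (sum F A) = (\<Sum>a\<in>A. pm_scale c (F a))"
  by (rule poly_mapping_eqI) (simp add: lookup_sum sum_distrib_left)

lemma pm_scale_pm_scale: "pm_scale c (pm_scale d f) = pm_scale (c * d) f"
  by (rule poly_mapping_eqI) (simp add: algebra_simps)

lemma lext_eq_sum_pm_scale:
  "lext R f = (\<Sum>m\<in>Poly_Mapping.keys f. pm_scale (Poly_Mapping.lookup f m) (R m))"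
  by (simp add: lext_def pm_scale_def)

lemma lookup_lext_keys:
  "Poly_Mapping.lookup (lext R f) y
     = (\<Sum>m\<in>Poly_Mapping.keys f. Poly_Mapping.lookup f m * Poly_Mapping.lookup (R m) y)"
  by (simp add: lext_eq_sum_pm_scale lookup_sum)

lemma lookup_lext:
  assumes "finite M" "Poly_Mapping.keys f \<subseteq> M"
  shows "Poly_Mapping.lookup (lext R f) y
           = (\<Sum>m\<in>M. Poly_Mapping.lookup f m * Poly_Mapping.lookup (R m) y)"
  unfolding lookup_lext_keys
  using assms by (intro sum.mono_neutral_left) (auto simp: in_keys_iff)

lemma lext_zero [simp]: "lext R 0 = 0"
  by (simp add: lext_def)

lemma lext_add: "lext R (f + g) = lext R f + lext R g"
proof (rule poly_mapping_eqI)
  fix y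
  let ?M = "Poly_Mapping.keys f \<union> Poly_Mapping.keys g"
  have "Poly_Mapping.keys (f + g) \<subseteq> ?M" by (rule keys_add)
  then show "Poly_Mapping.lookup (lext R (f + g)) y = Poly_Mapping.lookup (lext R f + lext R g) y"
    unfolding lookup_add
    by (subst (1 2 3) lookup_lext[where M = ?M]) (auto simp: lookup_add algebra_simps sum.distrib)
qed

lemma lext_sum: "lext R (sum F A) = (\<Sum>a\<in>A. lext R (F a))"
  by (induction A rule: infinite_finite_induct) (auto simp: lext_add)

lemma lext_single: "lext R (Poly_Mapping.single m c) = pm_scale c (R m)"
  by (rule poly_mapping_eqI) (simp add: lookup_lext[where M = "{m}"] lookup_single when_def)

lemma lext_basis [simp]: "lext R (basis m) = R m"
  by (simp add: basis_def lext_single)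

lemma lext_cong: "(\<And>m. m \<in> Poly_Mapping.keys f \<Longrightarrow> R m = R' m) \<Longrightarrow> lext R f = lext R' f"
  by (simp add: lext_def)

lemma lext_basis_id: "lext basis f = f"
proof (rule poly_mapping_eqI)
  fix k
  show "Poly_Mapping.lookup (lext basis f) k = Poly_Mapping.lookup f k"
    by (cases "k \<in> Poly_Mapping.keys f")
      (simp_all add: lookup_lext_keys basis_def lookup_single when_def in_keys_iff if_distrib
         sum.delta cong: if_cong)
qed

lemma keys_lext: "Poly_Mapping.keys (lext R f) \<subseteq> (\<Union>m\<in>Poly_Mapping.keys f. Poly_Mapping.keys (R m))"
proof
  fix y assume "y \<in> Poly_Mapping.keys (lext R f)"
  then have "(\<Sum>m\<in>Poly_Mapping.keys f. Poly_Mapping.lookup f m * Poly_Mapping.lookup (R m) y) \<noteq> 0"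
    by (simp add: in_keys_iff lookup_lext_keys)
  then obtain m where "m \<in> Poly_Mapping.keys f" "Poly_Mapping.lookup (R m) y \<noteq> 0"
    by (metis (no_types, lifting) mult_zero_right sum.neutral)
  then show "y \<in> (\<Union>m\<in>Poly_Mapping.keys f. Poly_Mapping.keys (R m))" by (auto simp: in_keys_iff)
qed

lemma lext_lext: "lext Q (lext R f) = lext (\<lambda>m. lext Q (R m)) f"
proof (rule poly_mapping_eqI)
  fix y
  let ?N = "\<Union>m\<in>Poly_Mapping.keys f. Poly_Mapping.keys (R m)"
  let ?c = "\<lambda>m n. Poly_Mapping.lookup f m * Poly_Mapping.lookup (R m) n * Poly_Mapping.lookup (Q n) y"
  have "Poly_Mapping.lookup (lext Q (lext R f)) y
      = (\<Sum>n\<in>?N. Poly_Mapping.lookup (lext R f) n * Poly_Mapping.lookup (Q n) y)"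
    by (rule lookup_lext[OF _ keys_lext]) auto
  also have "\<dots> = (\<Sum>m\<in>Poly_Mapping.keys f. \<Sum>n\<in>?N. ?c m n)"
    by (simp add: lookup_lext_keys sum_distrib_right sum.swap[of _ ?N])
  also have "\<dots> = (\<Sum>m\<in>Poly_Mapping.keys f. Poly_Mapping.lookup f m * Poly_Mapping.lookup (lext Q (R m)) y)"
  proof (rule sum.cong[OF refl])
    fix m assume "m \<in> Poly_Mapping.keys f"
    then have "Poly_Mapping.lookup (lext Q (R m)) y
        = (\<Sum>n\<in>?N. Poly_Mapping.lookup (R m) n * Poly_Mapping.lookup (Q n) y)"
      by (intro lookup_lext) auto
    then show "(\<Sum>n\<in>?N. ?c m n) = Poly_Mapping.lookup f m * Poly_Mapping.lookup (lext Q (R m)) y"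
      by (simp add: sum_distrib_left mult.assoc)
  qed
  also have "\<dots> = Poly_Mapping.lookup (lext (\<lambda>m. lext Q (R m)) f) y"
    by (simp add: lookup_lext_keys)
  finally show "Poly_Mapping.lookup (lext Q (lext R f)) y = Poly_Mapping.lookup (lext (\<lambda>m. lext Q (R m)) f) y" .
qed

lemma lext_sum_fun: "lext (\<lambda>p. \<Sum>a\<in>A. F a p) g = (\<Sum>a\<in>A. lext (F a) g)"
  by (rule poly_mapping_eqI) (simp add: lookup_lext_keys lookup_sum sum_distrib_left sum.swap[of _ A])

lemma lext_pm_scale_fun: "lext (\<lambda>p. pm_scale c (F p)) g = pm_scale c (lext F g)"
  by (rule poly_mapping_eqI) (simp add: lookup_lext_keys sum_distrib_left algebra_simps)

lemma listset_iff: "xs \<in> listset As \<longleftrightarrow> list_all2 (\<in>) xs As"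
  by (induction As arbitrary: xs) (auto simp: set_Cons_def list_all2_Cons2)

lemma set_Cons_eq_image: "set_Cons A B = (\<lambda>(a, xs). a # xs) ` (A \<times> B)"
  by (auto simp: set_Cons_def)

lemma sum_set_Cons: "sum F (set_Cons A B) = (\<Sum>a\<in>A. \<Sum>xs\<in>B. F (a # xs))"
proof -
  have "inj_on (\<lambda>(a, xs). a # xs) (A \<times> B)"
    by (auto simp: inj_on_def)
  then show ?thesis
    unfolding set_Cons_eq_image sum.reindex[OF \<open>inj_on _ _\<close>] sum.cartesian_product
    by (simp add: case_prod_beta)
qed

lemma finite_listset: "(\<And>A. A \<in> set As \<Longrightarrow> finite A) \<Longrightarrow> finite (listset As)"
  by (induction As) (simp_all add: set_Cons_eq_image)

lemma listset_set_subset: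
  assumes "ps \<in> listset (map g xs)" "\<And>x. x \<in> set xs \<Longrightarrow> g x \<subseteq> S"
  shows "set ps \<subseteq> S"
proof
  fix p assume "p \<in> set ps"
  then obtain i where i: "i < length ps" "ps ! i = p" by (meson in_set_conv_nth)
  have "list_all2 (\<in>) ps (map g xs)" using assms(1) by (simp add: listset_iff)
  with i have "p \<in> g (xs ! i)" "xs ! i \<in> set xs"
    by (auto simp: list_all2_conv_all_nth)
  then show "p \<in> S" using assms(2) by blast
qed

lemma mext_Nil: "mext op [] = Poly_Mapping.single (op []) 1"
  by (simp add: mext_def)

lemma mext_Cons: "mext op (f # fs) = lext (\<lambda>m. mext (\<lambda>ms. op (m # ms)) fs) f"
  by (simp add: mext_def sum_set_Cons lext_eq_sum_pm_scale pm_scale_sum pm_scale_single)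

lemma mext_map_basis: "mext op (map basis ms) = basis (op ms)"
  by (induction ms arbitrary: op) (simp_all add: mext_Nil mext_Cons basis_def[symmetric])

lemma mext_zero_factor: "0 \<in> set fs \<Longrightarrow> mext op fs = 0"
  by (induction fs arbitrary: op) (auto simp: mext_Cons lext_eq_sum_pm_scale)

lemma mext_single_one:
  "mext op (fs @ Poly_Mapping.single a 1 # gs)
     = mext (\<lambda>ms. op (take (length fs) ms @ a # drop (length fs) ms)) (fs @ gs)"
  by (induction fs arbitrary: op) (simp_all add: mext_Cons lext_single)

lemma mext_map_lext:
  "mext op (map (lext h) fs) = (\<Sum>ms\<in>listset (map Poly_Mapping.keys fs).
      pm_scale (prod_list (map2 Poly_Mapping.lookup fs ms)) (mext op (map h ms)))"
proof (induction fs arbitrary: op)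
  case Nil
  show ?case by simp
next
  case (Cons f fs)
  let ?L = "listset (map Poly_Mapping.keys fs)"
  let ?c = "\<lambda>ms. prod_list (map2 Poly_Mapping.lookup fs ms)"
  have "mext op (map (lext h) (f # fs))
      = lext (\<lambda>m. lext (\<lambda>p. mext (\<lambda>ps. op (p # ps)) (map (lext h) fs)) (h m)) f"
    by (simp add: mext_Cons lext_lext)
  also have "\<dots> = lext (\<lambda>m. \<Sum>ms\<in>?L. pm_scale (?c ms) (mext op (map h (m # ms)))) f"
    by (simp add: Cons.IH lext_sum_fun lext_pm_scale_fun mext_Cons)
  also have "\<dots> = (\<Sum>ms\<in>listset (map Poly_Mapping.keys (f # fs)).
      pm_scale (prod_list (map2 Poly_Mapping.lookup (f # fs) ms)) (mext op (map h ms)))"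
    by (simp add: lext_eq_sum_pm_scale pm_scale_sum pm_scale_pm_scale sum_set_Cons)
  finally show ?case .
qed

lemma keys_mext: "Poly_Mapping.keys (mext op fs) \<subseteq> op ` listset (map Poly_Mapping.keys fs)"
  unfolding mext_def by (rule order_trans[OF keys_sum]) auto

definition left_coeff :: "'a \<Rightarrow> ('a \<times> 'b \<Rightarrow>\<^sub>0 'k::field) \<Rightarrow> ('b \<Rightarrow>\<^sub>0 'k)" where
  "left_coeff T g = (\<Sum>p\<in>{p\<in>Poly_Mapping.keys g. fst p = T}.
                      Poly_Mapping.single (snd p) (Poly_Mapping.lookup g p))"

lemma lookup_left_coeff [simp]: "Poly_Mapping.lookup (left_coeff T g) r = Poly_Mapping.lookup g (T, r)"
proof -
  let ?S = "{p\<in>Poly_Mapping.keys g. fst p = T}"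
  have "Poly_Mapping.lookup (left_coeff T g) r = (\<Sum>p\<in>?S. if (T, r) = p then Poly_Mapping.lookup g p else 0)"
    unfolding left_coeff_def lookup_sum
    by (rule sum.cong[OF refl]) (auto simp: lookup_single when_def)
  also have "\<dots> = Poly_Mapping.lookup g (T, r)"
    by (simp add: in_keys_iff)
  finally show ?thesis .
qed

lemma keys_left_coeff: "Poly_Mapping.keys (left_coeff T g) = {r. (T, r) \<in> Poly_Mapping.keys g}"
  by (auto simp: in_keys_iff)

lemma keys_eq_Sigma_left_coeff:
  "Poly_Mapping.keys g = Sigma (fst ` Poly_Mapping.keys g) (\<lambda>T. Poly_Mapping.keys (left_coeff T g))"
  by (auto simp: keys_left_coeff image_iff) force

lemma left_coeff_sum: "left_coeff T (sum F A) = (\<Sum>a\<in>A. left_coeff T (F a))"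
  by (rule poly_mapping_eqI) (simp add: lookup_sum)

lemma left_coeff_add: "left_coeff T (f + g) = left_coeff T f + left_coeff T g"
  by (rule poly_mapping_eqI) (simp add: lookup_add)

lemma left_coeff_single:
  "left_coeff T (Poly_Mapping.single (a, b) c) = (if a = T then Poly_Mapping.single b c else 0)"
  by (rule poly_mapping_eqI) (simp add: lookup_single when_def)

lemma left_coeff_lext: "left_coeff T (lext R g) = lext (\<lambda>m. left_coeff T (R m)) g"
  by (rule poly_mapping_eqI) (simp add: lookup_lext_keys)

lemma left_coeff_mext:
  "left_coeff T (mext (\<lambda>ps. (A (map fst ps), B (map snd ps))) gs)
     = (\<Sum>Ts\<in>listset (map (\<lambda>g. fst ` Poly_Mapping.keys g) gs).
          if A Ts = T then mext B (map2 left_coeff Ts gs) else 0)"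
proof (induction gs arbitrary: A B)
  case Nil
  show ?case by (simp add: mext_Nil left_coeff_single)
next
  case (Cons g gs)
  let ?L = "listset (map (\<lambda>g. fst ` Poly_Mapping.keys g) gs)"
  let ?K = "\<lambda>t. Poly_Mapping.keys (left_coeff t g)"
  define F where "F t r Ts = (if A (t # Ts) = T
      then pm_scale (Poly_Mapping.lookup g (t, r)) (mext (\<lambda>rs. B (r # rs)) (map2 left_coeff Ts gs))
      else 0)" for t r Ts
  have "left_coeff T (mext (\<lambda>ps. (A (map fst ps), B (map snd ps))) (g # gs))
      = lext (\<lambda>p. \<Sum>Ts\<in>?L. if A (fst p # Ts) = T
          then mext (\<lambda>rs. B (snd p # rs)) (map2 left_coeff Ts gs) else 0) g"
    using Cons.IH[of "\<lambda>xs. A (_ # xs)" "\<lambda>xs. B (_ # xs)"]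
    by (simp add: mext_Cons left_coeff_lext)
  also have "\<dots> = (\<Sum>p\<in>Poly_Mapping.keys g. \<Sum>Ts\<in>?L. F (fst p) (snd p) Ts)"
    by (simp add: lext_eq_sum_pm_scale pm_scale_sum F_def if_distrib[of "pm_scale _"] cong: if_cong)
  also have "\<dots> = (\<Sum>t\<in>fst ` Poly_Mapping.keys g. \<Sum>r\<in>?K t. \<Sum>Ts\<in>?L. F t r Ts)"
    by (subst keys_eq_Sigma_left_coeff, subst sum.Sigma) (auto simp: case_prod_beta)
  also have "\<dots> = (\<Sum>t\<in>fst ` Poly_Mapping.keys g. \<Sum>Ts\<in>?L. \<Sum>r\<in>?K t. F t r Ts)"
    by (simp add: sum.swap[of _ "?K _"])
  also have "\<dots> = (\<Sum>t\<in>fst ` Poly_Mapping.keys g. \<Sum>Ts\<in>?L.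
        if A (t # Ts) = T then mext B (left_coeff t g # map2 left_coeff Ts gs) else 0)"
    by (intro sum.cong refl) (simp add: F_def mext_Cons lext_eq_sum_pm_scale)
  also have "\<dots> = (\<Sum>Ts\<in>listset (map (\<lambda>g. fst ` Poly_Mapping.keys g) (g # gs)).
          if A Ts = T then mext B (map2 left_coeff Ts (g # gs)) else 0)"
  proof -
    have "map2 left_coeff (t # Ts) (g # gs) = left_coeff t g # map2 left_coeff Ts gs" for t Ts
      by simp
    then show ?thesis unfolding list.map listset.simps sum_set_Cons by presburger
  qed
  finally show ?case .
qed

fun graft :: "'x tr list \<Rightarrow> 'x mono" where
  "graft [] = None"
| "graft [u] = Some u"
| "graft us = Some (Nd us)"

lemma filter_not_None_eq_map_Some:
  "filter (\<lambda>T. T \<noteq> None) Ts = map Some (map the (filter (\<lambda>T. T \<noteq> None) Ts))"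
  by (induction Ts) auto

lemma vee_m_eq_graft: "vee_m Ts = graft (map the (filter (\<lambda>T. T \<noteq> None) Ts))"
  by (cases "map the (filter (\<lambda>T. T \<noteq> None) Ts)" rule: graft.cases) (simp_all add: vee_m_def)

lemma graft_in_monomials: "(\<And>u. u \<in> set us \<Longrightarrow> reduced u) \<Longrightarrow> graft us \<in> monomials"
  by (cases us rule: graft.cases) (auto simp: monomials_def)

lemma vee_m_in_monomials: "set Ts \<subseteq> monomials \<Longrightarrow> vee_m Ts \<in> monomials"
  unfolding vee_m_eq_graft by (rule graft_in_monomials) (auto simp: monomials_def)

lemma vee_m_eq_None_iff: "vee_m Ts = None \<longleftrightarrow> (\<forall>T\<in>set Ts. T = None)"
proof -
  have "vee_m Ts = None \<longleftrightarrow> map the (filter (\<lambda>T. T \<noteq> None) Ts) = []"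
    unfolding vee_m_eq_graft
    by (cases "map the (filter (\<lambda>T. T \<noteq> None) Ts)" rule: graft.cases) auto
  then show ?thesis by (simp add: filter_empty_conv)
qed

lemma vee_m_eq_leaf_iff: "vee_m Ts = Some (Lf k) \<longleftrightarrow> filter (\<lambda>T. T \<noteq> None) Ts = [Some (Lf k)]"
  unfolding vee_m_eq_graft
  by (subst filter_not_None_eq_map_Some)
    (cases "map the (filter (\<lambda>T. T \<noteq> None) Ts)" rule: graft.cases, auto)

lemma vee_m_map_Some: "2 \<le> length ts \<Longrightarrow> vee_m (map Some ts) = Some (Nd ts)"
  by (cases ts rule: graft.cases) (auto simp: vee_m_eq_graft comp_def)

lemma vee_m_two:
  "vee_m [a, b] = (case a of None \<Rightarrow> b
     | Some a' \<Rightarrow> (case b of None \<Rightarrow> a | Some b' \<Rightarrow> Some (Nd [a', b'])))"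
  by (simp add: vee_m_def split: option.split)

lemma mem_set_if_vee_m_eq:
  assumes "vee_m Ts = T" "x \<in> set Ts"
  shows "x \<in> {None, T} \<union> (case T of Some (Nd us) \<Rightarrow> Some ` set us | _ \<Rightarrow> {})"
proof (cases x)
  case (Some y)
  obtain us where "vee_m Ts = graft us" "y \<in> set us"
    using vee_m_eq_graft assms(2) Some by force
  with assms(1) Some show ?thesis
    by (cases us rule: graft.cases) auto
qed simp

definition factorizations :: "'x mono \<Rightarrow> nat \<Rightarrow> 'x mono list set" where
  "factorizations T p = {Ts. length Ts = p \<and> set Ts \<subseteq> monomials \<and> vee_m Ts = T}"

lemma finite_factorizations: "finite (factorizations T p)"
proof -
  let ?V = "{None, T} \<union> (case T of Some (Nd us) \<Rightarrow> Some ` set us | _ \<Rightarrow> {})"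
  have "factorizations T p \<subseteq> {Ts. set Ts \<subseteq> ?V \<and> length Ts = p}"
    unfolding factorizations_def using mem_set_if_vee_m_eq by blast
  moreover have "finite ?V" by (auto split: option.splits tr.splits)
  then have "finite {Ts. set Ts \<subseteq> ?V \<and> length Ts = p}"
    by (rule finite_lists_length_eq)
  ultimately show ?thesis by (rule finite_subset)
qed

lemma None_in_monomials [simp]: "None \<in> monomials"
  by (simp add: monomials_def)

lemma leaf_in_monomials [simp]: "Some (Lf k) \<in> monomials"
  by (simp add: monomials_def)

lemma factorizations_None: "factorizations None n = {replicate n None}"
  by (auto simp: factorizations_def vee_m_eq_None_iff replicate_length_same[symmetric]
      intro: replicate_eqI)

lemma replicate_update:
  "i < n \<Longrightarrow> (replicate n x)[i := a] = replicate i x @ a # replicate (n - Suc i) x"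
  by (induction n arbitrary: i) (auto simp: nth_Cons' split: nat.split)

lemma filter_eq_singleton_iff_update:
  assumes "a \<noteq> None"
  shows "filter (\<lambda>T. T \<noteq> None) Ts = [a]
           \<longleftrightarrow> (\<exists>i<length Ts. Ts = (replicate (length Ts) None)[i := a])"
proof
  assume "filter (\<lambda>T. T \<noteq> None) Ts = [a]"
  then obtain us vs where Ts: "Ts = us @ a # vs" and us: "\<forall>u\<in>set us. u = None"
      and vs: "filter (\<lambda>T. T \<noteq> None) vs = []"
    by (auto simp: filter_eq_Cons_iff)
  have "us = replicate (length us) None" "vs = replicate (length vs) None"
    using us vs by (simp_all add: replicate_length_same filter_empty_conv)
  then have "Ts = (replicate (length Ts) None)[length us := a]"
    using Ts replicate_update[of "length us" "length Ts" None a] by simp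
  moreover have "length us < length Ts" using Ts by simp
  ultimately show "\<exists>i<length Ts. Ts = (replicate (length Ts) None)[i := a]"
    by blast
next
  assume "\<exists>i<length Ts. Ts = (replicate (length Ts) None)[i := a]"
  then obtain i m where "Ts = replicate i None @ a # replicate m None"
    by (metis replicate_update)
  then show "filter (\<lambda>T. T \<noteq> None) Ts = [a]"
    using assms by (simp add: filter_empty_conv)
qed

lemma factorizations_leaf:
  "factorizations (Some (Lf k)) n = (\<lambda>i. (replicate n None)[i := Some (Lf k)]) ` {..<n}"
proof -
  have "set ((replicate n None)[i := Some (Lf k)]) \<subseteq> monomials" for i
    using set_update_subset_insert[of "replicate n None" i "Some (Lf k)"] by auto
  then show ?thesis
    unfolding factorizations_def vee_m_eq_leaf_iff filter_eq_singleton_iff_update[OF option.distinct(2)]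
    by auto
qed

lemma inj_on_replicate_update: "a \<noteq> x \<Longrightarrow> inj_on (\<lambda>i. (replicate n x)[i := a]) {..<n}"
proof (rule inj_onI, rule ccontr)
  fix i j assume "a \<noteq> x" "i \<in> {..<n}" "i \<noteq> j"
    and "(replicate n x)[i := a] = (replicate n x)[j := a]"
  then have "a = (replicate n x)[j := a] ! i" by (metis lessThan_iff length_replicate nth_list_update_eq)
  also have "\<dots> = x" using \<open>i \<in> {..<n}\<close> \<open>i \<noteq> j\<close> by simp
  finally show False using \<open>a \<noteq> x\<close> by simp
qed

lemma factorizations_two:
  assumes "T1 \<in> monomials" "T2 \<in> monomials" "T1 \<noteq> None" "T2 \<noteq> None"
  shows "factorizations (vee_m [T1, T2]) 2
           = {[None, vee_m [T1, T2]], [T1, T2], [vee_m [T1, T2], None]}"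
proof -
  obtain t1 t2 where T: "T1 = Some t1" "T2 = Some t2" using assms by auto
  let ?T = "Some (Nd [t1, t2])"
  have v: "vee_m [T1, T2] = ?T" using T by (simp add: vee_m_two)
  have m: "Some t1 \<in> monomials" "Some t2 \<in> monomials" "?T \<in> monomials"
    using assms T by (auto simp: monomials_def)
  have "Ts \<in> factorizations ?T 2 \<longleftrightarrow> Ts \<in> {[None, ?T], [Some t1, Some t2], [?T, None]}" for Ts
  proof
    assume "Ts \<in> factorizations ?T 2"
    then obtain a b where "Ts = [a, b]" "vee_m [a, b] = ?T"
      by (auto simp: factorizations_def length_Suc_conv numeral_2_eq_2)
    then show "Ts \<in> {[None, ?T], [Some t1, Some t2], [?T, None]}"
      by (auto simp: vee_m_two split: option.splits)
  next
    assume "Ts \<in> {[None, ?T], [Some t1, Some t2], [?T, None]}"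
    then show "Ts \<in> factorizations ?T 2"
      by (elim insertE emptyE) (simp_all add: factorizations_def vee_m_two m)
  qed
  then have "factorizations ?T 2 = {[None, ?T], [Some t1, Some t2], [?T, None]}"
    by (rule set_eqI)
  then show ?thesis unfolding v using T by simp
qed

lemma vee_pair_unit: "vee_pair (xs @ (None, None) # ys) = vee_pair (xs @ ys)"
  by (simp add: vee_pair_def vee_m_def)

lemma vee2_map_delta_m_filter:
  "vee2 (map delta_m Ts)
     = (vee2 (map delta_m (filter (\<lambda>T. T \<noteq> None) Ts)) :: ('x mono \<times> 'x mono \<Rightarrow>\<^sub>0 'k::field))"
proof (induction "length Ts" arbitrary: Ts rule: less_induct)
  case less
  show ?case
  proof (cases "None \<in> set Ts")
    case True
    then obtain xs ys where Ts: "Ts = xs @ None # ys" by (meson split_list)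
    have op: "(\<lambda>qs. vee_pair (take n qs @ (None, None) # drop n qs)) = vee_pair" for n
      by (rule ext) (simp add: vee_pair_unit)
    have "vee2 (map delta_m Ts) = (mext (\<lambda>qs. vee_pair (take (length xs) qs @ (None, None) # drop (length xs) qs))
            (map delta_m xs @ map delta_m ys) :: ('x mono \<times> 'x mono \<Rightarrow>\<^sub>0 'k))"
      using mext_single_one[of vee_pair "map delta_m xs" "(None, None)" "map delta_m ys"]
      by (simp add: Ts vee2_def delta_m_def basis_def)
    also have "\<dots> = vee2 (map delta_m (xs @ ys))"
      by (simp only: op vee2_def map_append)
    also have "\<dots> = vee2 (map delta_m (filter (\<lambda>T. T \<noteq> None) (xs @ ys)))"
      by (rule less) (simp add: Ts)
    finally show ?thesis by (simp add: Ts)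
  next
    case False
    then have "filter (\<lambda>T. T \<noteq> None) Ts = Ts" by (metis (mono_tags, lifting) filter_id_conv)
    then show ?thesis by simp
  qed
qed

lemma vee2_singleton: "vee2 [g] = g"
proof -
  have "vee2 [g] = lext (\<lambda>m. Poly_Mapping.single (vee_pair [m]) 1) g"
    by (simp add: vee2_def mext_Cons mext_Nil)
  also have "(\<lambda>m. Poly_Mapping.single (vee_pair [m]) 1) = basis"
    by (auto simp: vee_pair_def vee_m_def basis_def split: option.splits)
  finally show ?thesis by (simp add: lext_basis_id)
qed

lemma delta_m_vee_m: "delta_m (vee_m Ts) = vee2 (map delta_m Ts)"
proof -
  obtain us where us: "filter (\<lambda>T. T \<noteq> None) Ts = map Some us" "vee_m Ts = graft us"
    using filter_not_None_eq_map_Some vee_m_eq_graft by blast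
  have "vee2 (map delta_m Ts) = vee2 (map delta_tr us)"
    by (subst vee2_map_delta_m_filter, simp only: us(1)) (simp add: delta_m_def comp_def)
  moreover have "delta_m (graft us) = vee2 (map delta_tr us)"
    by (cases us rule: graft.cases)
      (simp_all add: delta_m_def vee2_def mext_Nil basis_def vee_pair_def vee_m_def vee2_singleton[unfolded vee2_def])
  ultimately show ?thesis using us(2) by metis
qed

theorem Delta_a_vee: "Delta_a (vee fs) = vee2 (map Delta_a fs)"
proof -
  have "Delta_a (vee fs) = (\<Sum>ms\<in>listset (map Poly_Mapping.keys fs).
      pm_scale (prod_list (map2 Poly_Mapping.lookup fs ms)) (delta_m (vee_m ms)))"
    by (simp add: Delta_a_def vee_def mext_def lext_sum lext_single)
  also have "\<dots> = vee2 (map Delta_a fs)"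
    unfolding vee2_def Delta_a_def mext_map_lext by (simp add: delta_m_vee_m vee2_def)
  finally show ?thesis .
qed

lemma keys_delta_tr:
  "reduced t \<Longrightarrow> Poly_Mapping.keys (delta_tr t :: ('x mono \<times> 'x mono \<Rightarrow>\<^sub>0 'k::field)) \<subseteq> monomials \<times> monomials"
proof (induction t)
  case (Lf x)
  then show ?case
    using keys_add[of "basis (Some (Lf x), None) :: ('x mono \<times> 'x mono \<Rightarrow>\<^sub>0 'k)" "basis (None, Some (Lf x))"]
    by (auto simp: basis_def)
next
  case (Nd ts)
  let ?ds = "map delta_tr ts :: ('x mono \<times> 'x mono \<Rightarrow>\<^sub>0 'k) list"
  have "Poly_Mapping.keys (delta_tr (Nd ts) :: ('x mono \<times> 'x mono \<Rightarrow>\<^sub>0 'k))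
          \<subseteq> vee_pair ` listset (map Poly_Mapping.keys ?ds)"
    unfolding delta_tr.simps vee2_def by (rule keys_mext)
  also have "\<dots> \<subseteq> monomials \<times> monomials"
  proof
    fix q assume "q \<in> vee_pair ` listset (map Poly_Mapping.keys ?ds)"
    then obtain ps where ps: "ps \<in> listset (map (\<lambda>t. Poly_Mapping.keys (delta_tr t :: ('x mono \<times> 'x mono \<Rightarrow>\<^sub>0 'k))) ts)"
      and q: "q = vee_pair ps" by (auto simp: comp_def)
    have "set ps \<subseteq> monomials \<times> monomials"
      by (rule listset_set_subset[OF ps]) (use Nd in auto)
    then have "set (map fst ps) \<subseteq> monomials" "set (map snd ps) \<subseteq> monomials"
      by auto
    then show "q \<in> monomials \<times> monomials"
      by (simp add: q vee_pair_def vee_m_in_monomials)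
  qed
  finally show ?case .
qed

lemma keys_delta_m:
  "T \<in> monomials \<Longrightarrow> Poly_Mapping.keys (delta_m T :: ('x mono \<times> 'x mono \<Rightarrow>\<^sub>0 'k::field)) \<subseteq> monomials \<times> monomials"
  using keys_delta_tr by (auto simp: delta_m_def basis_def monomials_def split: option.splits)

lemma keys_Delta_a: "f \<in> Kinf \<Longrightarrow> Poly_Mapping.keys (Delta_a f) \<subseteq> monomials \<times> monomials"
  unfolding Delta_a_def Kinf_def using keys_lext[of delta_m f] keys_delta_m by fastforce

lemma basis_in_Kinf: "m \<in> monomials \<Longrightarrow> basis m \<in> Kinf"
  by (simp add: basis_def Kinf_def)

lemma KX_subset_Kinf: "KX \<subseteq> Kinf"
proof -
  have "binary t \<Longrightarrow> reduced t" for t :: "'x tr"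
    by (induction t) auto
  then show ?thesis by (auto simp: KX_def Kinf_def bin_monomials_def monomials_def)
qed

lemma dT_eq_left_coeff: "dT T f = left_coeff T (Delta_a f)"
  by (simp add: dT_def left_coeff_def)

lemma dT_in_Kinf: "f \<in> Kinf \<Longrightarrow> dT T f \<in> Kinf"
  using keys_Delta_a[of f] by (auto simp: Kinf_def dT_eq_left_coeff keys_left_coeff)

lemma dT_sum: "dT T (sum F A) = (\<Sum>a\<in>A. dT T (F a))"
  by (simp add: dT_eq_left_coeff Delta_a_def lext_sum left_coeff_sum)

lemma dT_zero [simp]: "dT T 0 = 0"
  by (simp add: dT_eq_left_coeff Delta_a_def left_coeff_def)

lemma dT_basis: "dT T (basis m) = left_coeff T (delta_m m)"
  by (simp add: dT_eq_left_coeff Delta_a_def)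

lemma dT_basis_None: "dT T (basis None) = (if T = None then basis None else 0)"
  unfolding dT_basis by (simp add: delta_m_def basis_def left_coeff_single)

lemma dT_basis_leaf:
  "dT T (basis (Some (Lf x)))
     = (if T = None then basis (Some (Lf x)) else if T = Some (Lf x) then basis None else 0)"
  unfolding dT_basis by (simp add: delta_m_def basis_def left_coeff_single left_coeff_add)

lemma dT_lext: "dT T (lext R f) = lext (\<lambda>m. dT T (R m)) f"
  by (simp add: dT_eq_left_coeff Delta_a_def lext_lext left_coeff_lext)

lemma dT_eq_lext_basis: "dT T f = lext (\<lambda>m. dT T (basis m)) f"
  using dT_lext[of T basis f] by (simp add: lext_basis_id)

lemma lext_cong_Kinf: "f \<in> Kinf \<Longrightarrow> (\<And>m. m \<in> monomials \<Longrightarrow> R m = R' m) \<Longrightarrow> lext R f = lext R' f"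
  by (rule lext_cong) (auto simp: Kinf_def)

lemma dT_eq_0_if_not_left_key: "T \<notin> fst ` Poly_Mapping.keys (Delta_a f) \<Longrightarrow> dT T f = 0"
  by (rule poly_mapping_eqI) (force simp: dT_eq_left_coeff in_keys_iff image_iff)

lemma dT_vee_listset:
  "dT T (vee fs) = (\<Sum>Ts\<in>listset (map (\<lambda>f. fst ` Poly_Mapping.keys (Delta_a f)) fs).
          if vee_m Ts = T then vee (map2 dT Ts fs) else 0)"
proof -
  have vee_pair: "vee_pair = (\<lambda>ps. (vee_m (map fst ps), vee_m (map snd ps)))"
    by (rule ext) (simp add: vee_pair_def)
  have "dT T (vee fs) = left_coeff T (mext (\<lambda>ps. (vee_m (map fst ps), vee_m (map snd ps))) (map Delta_a fs))"
    by (simp only: dT_eq_left_coeff Delta_a_vee vee2_def vee_pair)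
  also have "\<dots> = (\<Sum>Ts\<in>listset (map (\<lambda>f. fst ` Poly_Mapping.keys (Delta_a f)) fs).
          if vee_m Ts = T then vee (map2 dT Ts fs) else 0)"
  proof -
    have "map2 left_coeff Ts (map Delta_a fs) = map2 dT Ts fs" if "length Ts = length fs" for Ts
      using that by (induction Ts fs rule: list_induct2) (simp_all add: dT_eq_left_coeff)
    then show ?thesis
      unfolding left_coeff_mext map_map comp_def
      by (intro sum.cong refl) (simp add: vee_def listset_iff list_all2_lengthD)
  qed
  finally show ?thesis .
qed

theorem dT_vee:
  assumes "set fs \<subseteq> Kinf"
  shows "dT T (vee fs) = (\<Sum>Ts\<in>factorizations T (length fs). vee (map2 dT Ts fs))"
proof -
  let ?A = "map (\<lambda>f. fst ` Poly_Mapping.keys (Delta_a f)) fs"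
  let ?S = "{Ts\<in>listset ?A. vee_m Ts = T}"
  have "finite (listset ?A)" by (rule finite_listset) auto
  then have "dT T (vee fs) = (\<Sum>Ts\<in>?S. vee (map2 dT Ts fs))"
    unfolding dT_vee_listset by (simp add: sum.inter_filter)
  also have "\<dots> = (\<Sum>Ts\<in>factorizations T (length fs). vee (map2 dT Ts fs))"
  proof (rule sum.mono_neutral_left[OF finite_factorizations])
    show "?S \<subseteq> factorizations T (length fs)"
    proof
      fix Ts assume Ts: "Ts \<in> ?S"
      have "set Ts \<subseteq> monomials"
        by (rule listset_set_subset[of _ "\<lambda>f. fst ` Poly_Mapping.keys (Delta_a f)" fs])
           (use Ts keys_Delta_a assms in force)+
      moreover have "length Ts = length fs"
        using Ts by (auto simp: listset_iff dest: list_all2_lengthD)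
      ultimately show "Ts \<in> factorizations T (length fs)" using Ts by (simp add: factorizations_def)
    qed
    show "\<forall>Ts\<in>factorizations T (length fs) - ?S. vee (map2 dT Ts fs) = 0"
    proof
      fix Ts assume Ts: "Ts \<in> factorizations T (length fs) - ?S"
      then have l: "length Ts = length fs" and "\<not> list_all2 (\<in>) Ts ?A"
        by (auto simp: factorizations_def listset_iff)
      then obtain i where i: "i < length fs" "Ts ! i \<notin> fst ` Poly_Mapping.keys (Delta_a (fs ! i))"
        by (auto simp: list_all2_conv_all_nth)
      then have "map2 dT Ts fs ! i = 0" using l by (simp add: dT_eq_0_if_not_left_key)
      then have "0 \<in> set (map2 dT Ts fs)" using i l by (metis length_map length_zip min.idem nth_mem)
      then show "vee (map2 dT Ts fs) = 0" by (simp add: vee_def mext_zero_factor)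
    qed
  qed
  finally show ?thesis .
qed

lemma monomial_induct [consumes 1, case_names None Leaf Node]:
  assumes "T \<in> monomials" "P None" "\<And>x. P (Some (Lf x))"
    and "\<And>ts. 2 \<le> length ts \<Longrightarrow> (\<And>t. t \<in> set ts \<Longrightarrow> Some t \<in> monomials)
           \<Longrightarrow> (\<And>t. t \<in> set ts \<Longrightarrow> P (Some t)) \<Longrightarrow> P (Some (Nd ts))"
  shows "P T"
proof -
  have "reduced t \<Longrightarrow> P (Some t)" for t
    by (induction t) (auto simp: monomials_def intro!: assms(3,4))
  then show ?thesis using assms(1,2) by (auto simp: monomials_def)
qed

lemma basis_Nd_eq_vee:
  assumes "2 \<le> length ts"
  shows "basis (Some (Nd ts)) = vee (map (\<lambda>t. basis (Some t)) ts)"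
proof -
  have "vee (map (\<lambda>t. basis (Some t)) ts) = mext vee_m (map basis (map Some ts))"
    by (simp add: vee_def comp_def)
  also have "\<dots> = basis (Some (Nd ts))"
    by (simp only: mext_map_basis vee_m_map_Some[OF assms])
  finally show ?thesis by (rule sym)
qed

lemma set_map_basis_in_Kinf:
  "(\<And>t. t \<in> set ts \<Longrightarrow> Some t \<in> monomials) \<Longrightarrow> set (map (\<lambda>t. basis (Some t)) ts) \<subseteq> Kinf"
  by (auto simp: basis_in_Kinf)

lemma map2_replicate: "length bs = n \<Longrightarrow> map2 f (replicate n x) bs = map (f x) bs"
  by (induction bs arbitrary: n) auto

lemma dT_None_basis: "T \<in> monomials \<Longrightarrow> dT None (basis T :: 'x mono \<Rightarrow>\<^sub>0 'k::field) = basis T"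
proof (induction T rule: monomial_induct)
  case (Node ts)
  let ?bs = "map (\<lambda>t. basis (Some t)) ts :: ('x mono \<Rightarrow>\<^sub>0 'k) list"
  have "dT None (vee ?bs) = vee (map (dT None) ?bs)"
    by (simp add: dT_vee[OF set_map_basis_in_Kinf[OF Node(2)]] factorizations_None map2_replicate)
  also have "map (dT None) ?bs = ?bs"
    unfolding map_map by (rule map_cong) (simp_all add: Node(3))
  finally show ?case by (simp add: basis_Nd_eq_vee[OF Node(1)])
qed (simp_all add: dT_basis_None dT_basis_leaf)

lemma dT_None: "f \<in> Kinf \<Longrightarrow> dT None f = f"
  by (subst dT_eq_lext_basis) (simp add: lext_cong_Kinf[of f _ basis] dT_None_basis lext_basis_id)

lemma map2_list_update:
  "length xs = length ys \<Longrightarrow> i < length ys \<Longrightarrow>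
    map2 f (xs[i := x]) ys = (map2 f xs ys)[i := f x (ys ! i)]"
  by (rule nth_equalityI) (auto simp: nth_list_update)

text \<open>The leaf \<open>x\<^sub>k\<close> factors a tree only as \<open>vee(1,\<dots>,x\<^sub>k,\<dots>,1)\<close>, so (iii) reproduces
the recursion defining \<open>der_tr\<close>.\<close>

lemma dT_leaf_basis:
  "T \<in> monomials \<Longrightarrow> dT (Some (Lf k)) (basis T :: 'x mono \<Rightarrow>\<^sub>0 'k::field) = der_m k T"
proof (induction T rule: monomial_induct)
  case (Node ts)
  let ?bs = "map (\<lambda>t. basis (Some t)) ts :: ('x mono \<Rightarrow>\<^sub>0 'k) list"
  let ?L = "Some (Lf k)"
  let ?n = "length ts"
  have units: "map (dT None \<circ> (\<lambda>t. basis (Some t))) ts = ?bs"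
    by (rule map_cong) (simp_all add: dT_None_basis Node(2))
  have "dT ?L (basis (Some (Nd ts))) = (\<Sum>Ts\<in>factorizations ?L ?n. vee (map2 dT Ts ?bs))"
    by (simp add: basis_Nd_eq_vee[OF Node(1)] dT_vee[OF set_map_basis_in_Kinf[OF Node(2)]])
  also have "\<dots> = (\<Sum>i<?n. vee (map2 dT ((replicate ?n None)[i := ?L]) ?bs))"
    unfolding factorizations_leaf sum.reindex[OF inj_on_replicate_update[OF option.distinct(2)]]
    by simp
  also have "\<dots> = (\<Sum>i<?n. vee (?bs[i := der_tr k (ts ! i)]))"
  proof (rule sum.cong[OF refl])
    fix i assume i: "i \<in> {..<?n}"
    then have "map2 dT ((replicate ?n None)[i := ?L]) ?bs = (map (dT None) ?bs)[i := dT ?L (?bs ! i)]"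
      by (simp add: map2_list_update map2_replicate)
    also have "\<dots> = ?bs[i := der_tr k (ts ! i)]"
      using i Node(3)[of "ts ! i"] by (simp add: units der_m_def)
    finally show "vee (map2 dT ((replicate ?n None)[i := ?L]) ?bs) = vee (?bs[i := der_tr k (ts ! i)])"
      by simp
  qed
  also have "\<dots> = der_m k (Some (Nd ts))" by (simp add: der_m_def)
  finally show ?case .
qed (auto simp: dT_basis_None dT_basis_leaf der_m_def)

theorem dT_leaf_eq_der: "f \<in> Kinf \<Longrightarrow> dT (Some (Lf k)) f = der k f"
proof -
  assume f: "f \<in> Kinf"
  have "dT (Some (Lf k)) f = lext (\<lambda>m. dT (Some (Lf k)) (basis m)) f"
    by (rule dT_eq_lext_basis)
  also have "\<dots> = lext (der_m k) f"
    using f by (rule lext_cong_Kinf) (rule dT_leaf_basis)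
  finally show ?thesis by (simp add: der_def)
qed

lemma dT_dT_vee:
  assumes "set bs \<subseteq> Kinf"
  shows "dT S (dT T (vee bs)) = (\<Sum>Ts\<in>factorizations T (length bs). \<Sum>Ss\<in>factorizations S (length bs).
            vee (map2 dT Ss (map2 dT Ts bs)))"
  unfolding dT_vee[OF assms] dT_sum
proof (rule sum.cong[OF refl])
  fix Ts assume "Ts \<in> factorizations T (length bs)"
  then have "length (map2 dT Ts bs) = length bs"
    by (simp add: factorizations_def)
  moreover have "set (map2 dT Ts bs) \<subseteq> Kinf"
    using assms by (auto simp: set_zip intro!: dT_in_Kinf)
  ultimately show "dT S (vee (map2 dT Ts bs))
      = (\<Sum>Ss\<in>factorizations S (length bs). vee (map2 dT Ss (map2 dT Ts bs)))"
    by (metis dT_vee)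
qed

lemma dT_commute_basis:
  "R \<in> monomials \<Longrightarrow> dT S (dT T (basis R :: 'x mono \<Rightarrow>\<^sub>0 'k::field)) = dT T (dT S (basis R))"
proof (induction R arbitrary: S T rule: monomial_induct)
  case (Node ts)
  let ?bs = "map (\<lambda>t. basis (Some t)) ts :: ('x mono \<Rightarrow>\<^sub>0 'k) list"
  let ?n = "length ts"
  have K: "set ?bs \<subseteq> Kinf" by (rule set_map_basis_in_Kinf[OF Node(2)])
  have factorwise: "map2 dT Ss (map2 dT Ts ?bs) = map2 dT Ts (map2 dT Ss ?bs)"
    if "Ts \<in> factorizations T ?n" "Ss \<in> factorizations S ?n" for Ts Ss
  proof (rule nth_equalityI)
    show "length (map2 dT Ss (map2 dT Ts ?bs)) = length (map2 dT Ts (map2 dT Ss ?bs))"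
      using that by (simp add: factorizations_def)
  next
    fix i assume "i < length (map2 dT Ss (map2 dT Ts ?bs))"
    then have "i < ?n" "i < length Ts" "i < length Ss"
      using that by (auto simp: factorizations_def)
    then show "map2 dT Ss (map2 dT Ts ?bs) ! i = map2 dT Ts (map2 dT Ss ?bs) ! i"
      using Node(3)[of "ts ! i" "Ss ! i" "Ts ! i"] by simp
  qed
  have "dT S (dT T (vee ?bs)) = (\<Sum>Ts\<in>factorizations T ?n. \<Sum>Ss\<in>factorizations S ?n.
          vee (map2 dT Ss (map2 dT Ts ?bs)))"
    using dT_dT_vee[OF K] by simp
  also have "\<dots> = (\<Sum>Ss\<in>factorizations S ?n. \<Sum>Ts\<in>factorizations T ?n.
          vee (map2 dT Ts (map2 dT Ss ?bs)))"
    by (subst sum.swap) (simp add: factorwise)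
  also have "\<dots> = dT T (dT S (vee ?bs))"
    using dT_dT_vee[OF K] by simp
  finally show ?case by (simp add: basis_Nd_eq_vee[OF Node(1)])
qed (auto simp: dT_basis_None dT_basis_leaf)

theorem dT_commute: "f \<in> Kinf \<Longrightarrow> dT S (dT T f) = dT T (dT S f)"
proof -
  assume f: "f \<in> Kinf"
  have "dT S (dT T f) = lext (\<lambda>m. dT S (dT T (basis m))) f"
    by (subst dT_eq_lext_basis) (simp add: dT_lext)
  also have "\<dots> = lext (\<lambda>m. dT T (dT S (basis m))) f"
    using f by (rule lext_cong_Kinf) (rule dT_commute_basis)
  also have "\<dots> = dT T (dT S f)"
    by (subst (2) dT_eq_lext_basis) (simp add: dT_lext)
  finally show ?thesis .
qed

theorem dT_mult:
  assumes "T1 \<in> monomials" "T2 \<in> monomials" "T1 \<noteq> None" "T2 \<noteq> None" "f1 \<in> Kinf" "f2 \<in> Kinf"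
  shows "dT (vee_m [T1, T2]) (mult f1 f2) =
          mult f1 (dT (vee_m [T1, T2]) f2) + mult (dT T1 f1) (dT T2 f2)
          + mult (dT (vee_m [T1, T2]) f1) f2"
proof -
  let ?T = "vee_m [T1, T2]"
  have "?T \<noteq> None" using assms(3,4) by (simp add: vee_m_two split: option.splits)
  then have distinct: "[None, ?T] \<noteq> [T1, T2]" "[None, ?T] \<noteq> [?T, None]" "[T1, T2] \<noteq> [?T, None]"
    using assms(3,4) by auto
  have "dT ?T (mult f1 f2) = (\<Sum>Ts\<in>factorizations ?T 2. vee (map2 dT Ts [f1, f2]))"
    using dT_vee[of "[f1, f2]" ?T] assms(5,6) by (simp add: mult_def numeral_2_eq_2)
  also have "\<dots> = vee (map2 dT [None, ?T] [f1, f2])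
      + (vee (map2 dT [T1, T2] [f1, f2]) + vee (map2 dT [?T, None] [f1, f2]))"
    using distinct by (simp add: factorizations_two[OF assms(1-4)])
  also have "\<dots> = mult f1 (dT ?T f2) + mult (dT T1 f1) (dT T2 f2) + mult (dT ?T f1) f2"
    using assms(5,6) by (simp add: mult_def dT_None add.assoc)
  finally show ?thesis .
qed

theorem proposition4p3p7:
  shows
  "(\<forall>S\<in>(monomials :: ('x::countable) mono set). \<forall>T\<in>monomials.
       \<forall>f\<in>(Kinf :: ('x mono \<Rightarrow>\<^sub>0 'k::field_char_0) set).
       dT S (dT T f) = dT T (dT S f))
   \<and> (\<forall>k::'x. \<forall>f\<in>(Kinf :: ('x mono \<Rightarrow>\<^sub>0 'k) set). dT (Some (Lf k)) f = der k f)
   \<and> (\<forall>T\<in>(monomials :: 'x mono set). \<forall>p\<ge>1. \<forall>fs :: ('x mono \<Rightarrow>\<^sub>0 'k) list.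
        length fs = p \<and> set fs \<subseteq> Kinf \<longrightarrow>
        dT T (vee fs) =
          (\<Sum>Ts\<in>{Ts. length Ts = p \<and> set Ts \<subseteq> monomials \<and> vee_m Ts = T}.
              vee (map2 dT Ts fs)))
   \<and> (\<forall>T1\<in>(monomials :: 'x mono set). \<forall>T2\<in>monomials. \<forall>f1\<in>(KX :: ('x mono \<Rightarrow>\<^sub>0 'k) set). \<forall>f2\<in>KX.
        T1 \<noteq> None \<and> T2 \<noteq> None \<longrightarrow>
        dT (vee_m [T1, T2]) (mult f1 f2) =
          mult f1 (dT (vee_m [T1, T2]) f2) + mult (dT T1 f1) (dT T2 f2)
          + mult (dT (vee_m [T1, T2]) f1) f2)"
  by (intro conjI ballI allI impI; (elim conjE)?)
    (erule dT_commute, erule dT_leaf_eq_der, simp add: dT_vee factorizations_def,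
     simp add: dT_mult subsetD[OF KX_subset_Kinf])

end
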